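(* Let $A, B \subseteq \omega$ be infinite. Then there is a single enumeration functional $\Psi$ with $\Psi(C) = A$ for every infinite $C \subseteq B$ if and only if there is a single relative c.e. operator $\Theta$ with $\Theta(C) = A$ for every infinite $C\subseteq B$.
   Context: An enumeration functional is a c.e. set $\Psi$ of pairs $(E,F)$ of finite subsets of $\omega$, with $\Psi(X) = \bigcup\{F : \exists E\subseteq X\ (E,F)\in\Psi\}$ (it uses only positive information about $X$). A relative c.e. operator is a c.e. set $\Theta$ of pairs $(\sigma,x)\in 2^{<\omega}\times\omega$, with $\Theta(X)$ the set of $x$ such that $(\sigma,x)\in\Theta$ for some initial segment $\sigma$ of the characteristic function of $X$ (it may use both positive and negative information). *)

theory Defs
  imports Main "HOL-Library.Nat_Bijection"
begin

inductive prim_rec :: "nat \<Rightarrow> (nat list \<Rightarrow> nat) \<Rightarrow> bool" where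
  pr_zero: "prim_rec n (\<lambda>_. 0)"
| pr_succ: "prim_rec 1 (\<lambda>xs. Suc (hd xs))"
| pr_proj: "i < n \<Longrightarrow> prim_rec n (\<lambda>xs. xs ! i)"
| pr_comp: "prim_rec m g \<Longrightarrow> length fs = m \<Longrightarrow> (\<forall>i<m. prim_rec n (fs ! i))
            \<Longrightarrow> prim_rec n (\<lambda>xs. g (map (\<lambda>f. f xs) fs))"
| pr_rec: "prim_rec n g \<Longrightarrow> prim_rec (Suc (Suc n)) h
            \<Longrightarrow> prim_rec (Suc n)
                 (\<lambda>xs. rec_nat (g (tl xs)) (\<lambda>y r. h (y # r # tl xs)) (hd xs))"

text \<open>A set of naturals is c.e. iff it is the projection of a primitive recursive
  (binary) relation (Kleene normal form).\<close>
definition ce :: "nat set \<Rightarrow> bool" where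
  "ce S \<longleftrightarrow> (\<exists>f. prim_rec 2 f \<and> S = {x. \<exists>y. f [x, y] \<noteq> 0})"

definition enum_functional :: "(nat set \<times> nat set) set \<Rightarrow> bool" where
  "enum_functional \<Psi> \<longleftrightarrow>
     (\<forall>(E, F)\<in>\<Psi>. finite E \<and> finite F) \<and>
     ce {prod_encode (set_encode E, set_encode F) | E F. (E, F) \<in> \<Psi>}"

definition enum_apply :: "(nat set \<times> nat set) set \<Rightarrow> nat set \<Rightarrow> nat set" where
  "enum_apply \<Psi> X = \<Union>{F. \<exists>E. E \<subseteq> X \<and> (E, F) \<in> \<Psi>}"

definition string_code :: "bool list \<Rightarrow> nat" where
  "string_code \<sigma> = list_encode (map of_bool \<sigma>)"

definition rel_ce_operator :: "(bool list \<times> nat) set \<Rightarrow> bool" where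
  "rel_ce_operator \<Theta> \<longleftrightarrow> ce {prod_encode (string_code \<sigma>, x) | \<sigma> x. (\<sigma>, x) \<in> \<Theta>}"

definition initial_seg :: "bool list \<Rightarrow> nat set \<Rightarrow> bool" where
  "initial_seg \<sigma> X \<longleftrightarrow> (\<forall>i < length \<sigma>. \<sigma> ! i = (i \<in> X))"

definition op_apply :: "(bool list \<times> nat) set \<Rightarrow> nat set \<Rightarrow> nat set" where
  "op_apply \<Theta> X = {x. \<exists>\<sigma>. initial_seg \<sigma> X \<and> (\<sigma>, x) \<in> \<Theta>}"

end

theory Submission
  imports Defs
begin

text \<open>An enumeration functional \<open>\<Psi>\<close> becomes a relative c.e. operator by reading a string
  \<open>\<sigma>\<close> positively: \<open>x\<close> is enumerated from \<open>\<sigma>\<close> when some \<open>(E, F) \<in> \<Psi>\<close> has \<open>E\<close> among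
  the positions where \<open>\<sigma>\<close> is true and \<open>x \<in> F\<close>; this operator agrees with \<open>\<Psi>\<close> on every set.
  Conversely, from \<open>\<Theta>\<close> take the pairs \<open>(S, {x})\<close> with \<open>(\<sigma>, x) \<in> \<Theta>\<close> and \<open>S\<close> the positive
  part of \<open>\<sigma>\<close>. This functional enumerates at least \<open>\<Theta>(C)\<close>. If it enumerates \<open>x\<close> from
  \<open>C\<close>, then \<open>\<sigma>\<close> is an initial segment of \<open>S \<union> {i \<in> C. i \<ge> |\<sigma>|}\<close>, a cofinite subset of
  \<open>C\<close>, so when \<open>C \<subseteq> B\<close> is infinite, \<open>x\<close> lies in \<open>\<Theta>\<close> of an infinite subset of \<open>B\<close>,
  which is \<open>A\<close>. Neither direction needs \<open>A\<close> or \<open>B\<close> to be infinite.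

  Both translations are computable because their code sets are projections of primitive
  recursive relations, with strings parametrised by a length \<open>N\<close> and the canonical index
  \<open>m\<close> of their positive part.\<close>

section \<open>Primitive recursive functions\<close>

text \<open>\<^const>\<open>prim_rec\<close> also fixes the values of a function on argument lists of the wrong
  length; only the values on lists of length \<open>n\<close> matter, so we work up to that equivalence.\<close>

definition primrec_fun :: "nat \<Rightarrow> (nat list \<Rightarrow> nat) \<Rightarrow> bool" where
  "primrec_fun n f \<longleftrightarrow> (\<exists>g. prim_rec n g \<and> (\<forall>xs. length xs = n \<longrightarrow> g xs = f xs))"

definition primrec_pred :: "nat \<Rightarrow> (nat list \<Rightarrow> bool) \<Rightarrow> bool" where
  "primrec_pred n P \<longleftrightarrow> primrec_fun n (\<lambda>xs. of_bool (P xs))"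

lemma prim_rec_imp_primrec_fun: "prim_rec n f \<Longrightarrow> primrec_fun n f"
  unfolding primrec_fun_def by blast

lemma primrec_fun_cong:
  "primrec_fun n f \<Longrightarrow> (\<And>xs. length xs = n \<Longrightarrow> f xs = g xs) \<Longrightarrow> primrec_fun n g"
  unfolding primrec_fun_def by metis

lemma primrec_fun_zero: "primrec_fun n (\<lambda>_. 0)"
  using pr_zero by (rule prim_rec_imp_primrec_fun)

lemma primrec_fun_proj: "i < n \<Longrightarrow> primrec_fun n (\<lambda>xs. xs ! i)"
  using pr_proj by (rule prim_rec_imp_primrec_fun)

lemma primrec_fun_comp:
  assumes g: "primrec_fun m g" and len: "length fs = m" and fs: "\<forall>i<m. primrec_fun n (fs ! i)"
  shows "primrec_fun n (\<lambda>xs. g (map (\<lambda>f. f xs) fs))"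
proof -
  obtain g' where g': "prim_rec m g'" "\<forall>xs. length xs = m \<longrightarrow> g' xs = g xs"
    using g unfolding primrec_fun_def by blast
  obtain H where H: "\<forall>i<m. prim_rec n (H i) \<and> (\<forall>xs. length xs = n \<longrightarrow> H i xs = (fs ! i) xs)"
    using fs unfolding primrec_fun_def by metis
  define hs where "hs = map H [0..<m]"
  have "prim_rec n (\<lambda>xs. g' (map (\<lambda>f. f xs) hs))"
    by (rule pr_comp[OF g'(1)]) (auto simp: hs_def H)
  moreover have "g' (map (\<lambda>f. f xs) hs) = g (map (\<lambda>f. f xs) fs)" if "length xs = n" for xs
  proof -
    have "map (\<lambda>f. f xs) hs = map (\<lambda>f. f xs) fs"
      using that len H by (auto simp: hs_def intro!: nth_equalityI)
    then show ?thesis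
      using g'(2) len by simp
  qed
  ultimately show ?thesis
    unfolding primrec_fun_def by blast
qed

lemma primrec_fun_rec:
  assumes g: "primrec_fun n g" and h: "primrec_fun (Suc (Suc n)) h"
    and F_0: "\<And>xs. length xs = n \<Longrightarrow> F (0 # xs) = g xs"
    and F_Suc: "\<And>y xs. length xs = n \<Longrightarrow> F (Suc y # xs) = h (y # F (y # xs) # xs)"
  shows "primrec_fun (Suc n) F"
proof -
  obtain g' where g': "prim_rec n g'" "\<forall>xs. length xs = n \<longrightarrow> g' xs = g xs"
    using g unfolding primrec_fun_def by blast
  obtain h' where h': "prim_rec (Suc (Suc n)) h'" "\<forall>xs. length xs = Suc (Suc n) \<longrightarrow> h' xs = h xs"
    using h unfolding primrec_fun_def by blast
  have "rec_nat (g' ys) (\<lambda>y r. h' (y # r # ys)) y = F (y # ys)" if "length ys = n" for y ys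
    using that by (induction y) (simp_all add: g' h' F_0 F_Suc)
  then have "rec_nat (g' (tl xs)) (\<lambda>y r. h' (y # r # tl xs)) (hd xs) = F xs"
    if "length xs = Suc n" for xs
    using that by (cases xs) simp_all
  then show ?thesis
    unfolding primrec_fun_def using pr_rec[OF g'(1) h'(1)] by blast
qed

lemma primrec_fun_comp1:
  "primrec_fun 1 g \<Longrightarrow> primrec_fun n a \<Longrightarrow> primrec_fun n (\<lambda>xs. g [a xs])"
  using primrec_fun_comp[of 1 g "[a]" n] by simp

lemma primrec_fun_comp2:
  "primrec_fun 2 g \<Longrightarrow> primrec_fun n a \<Longrightarrow> primrec_fun n b \<Longrightarrow> primrec_fun n (\<lambda>xs. g [a xs, b xs])"
  using primrec_fun_comp[of 2 g "[a, b]" n] by (simp add: less_2_cases_iff)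

lemma primrec_fun_comp3:
  "primrec_fun 3 g \<Longrightarrow> primrec_fun n a \<Longrightarrow> primrec_fun n b \<Longrightarrow> primrec_fun n c
    \<Longrightarrow> primrec_fun n (\<lambda>xs. g [a xs, b xs, c xs])"
  using primrec_fun_comp[of 3 g "[a, b, c]" n] by (simp add: numeral_3_eq_3 less_Suc_eq)

lemma primrec_fun_reindex:
  assumes f: "primrec_fun m f" and idx: "\<And>xs j. length xs = n \<Longrightarrow> j < m \<Longrightarrow> ys xs ! j = xs ! idx j"
    and idx_less: "\<And>j. j < m \<Longrightarrow> idx j < n" and len: "\<And>xs. length xs = n \<Longrightarrow> length (ys xs) = m"
  shows "primrec_fun n (\<lambda>xs. f (ys xs))"
proof -
  have "primrec_fun n (\<lambda>xs. f (map (\<lambda>g. g xs) (map (\<lambda>j xs. xs ! idx j) [0..<m])))"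
    by (rule primrec_fun_comp[OF f]) (auto intro: primrec_fun_proj idx_less)
  then show ?thesis
    by (rule primrec_fun_cong) (rule arg_cong[where f=f], rule nth_equalityI, simp_all add: len idx)
qed

lemma primrec_fun_Suc: "primrec_fun n a \<Longrightarrow> primrec_fun n (\<lambda>xs. Suc (a xs))"
proof -
  have "primrec_fun 1 (\<lambda>xs. Suc (xs ! 0))"
    by (rule primrec_fun_cong[OF prim_rec_imp_primrec_fun[OF pr_succ]]) (auto simp: length_Suc_conv)
  from primrec_fun_comp1[OF this]
  show "primrec_fun n a \<Longrightarrow> primrec_fun n (\<lambda>xs. Suc (a xs))"
    by simp
qed

lemma primrec_fun_const: "primrec_fun n (\<lambda>_. c)"
proof (induction c)
  case 0
  show ?case by (rule primrec_fun_zero)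
next
  case (Suc c)
  from primrec_fun_Suc[OF this] show ?case .
qed

lemma primrec_fun_tl: "primrec_fun n f \<Longrightarrow> primrec_fun (Suc n) (\<lambda>ys. f (tl ys))"
  by (rule primrec_fun_reindex[where idx=Suc]) (simp_all add: nth_tl)

lemma primrec_fun_hd: "primrec_fun (Suc n) hd"
  by (rule primrec_fun_cong[OF primrec_fun_proj[of 0]]) (auto simp: length_Suc_conv)

lemma primrec_fun_subst_hd:
  assumes F: "primrec_fun (Suc n) F" and b: "primrec_fun n b"
  shows "primrec_fun n (\<lambda>xs. F (b xs # xs))"
proof -
  have "primrec_fun n (\<lambda>xs. F (map (\<lambda>f. f xs) (b # map (\<lambda>j xs. xs ! j) [0..<n])))"
    by (rule primrec_fun_comp[OF F]) (auto simp: nth_Cons primrec_fun_proj b split: nat.split)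
  then show ?thesis
    by (rule primrec_fun_cong)
      (rule arg_cong[where f=F], rule nth_equalityI, auto simp: nth_Cons split: nat.split)
qed

lemma primrec_fun_add: "primrec_fun n a \<Longrightarrow> primrec_fun n b \<Longrightarrow> primrec_fun n (\<lambda>xs. a xs + b xs)"
proof -
  have "primrec_fun (Suc (Suc 0)) (\<lambda>xs. xs ! 0 + xs ! 1)"
    by (rule primrec_fun_rec[where g="\<lambda>xs. xs ! 0" and h="\<lambda>ys. Suc (ys ! 1)"])
      (simp_all add: primrec_fun_proj primrec_fun_Suc)
  from primrec_fun_comp2[OF this[folded numeral_2_eq_2]]
  show "primrec_fun n a \<Longrightarrow> primrec_fun n b \<Longrightarrow> primrec_fun n (\<lambda>xs. a xs + b xs)"
    by simp
qed

lemma primrec_fun_diff: "primrec_fun n a \<Longrightarrow> primrec_fun n b \<Longrightarrow> primrec_fun n (\<lambda>xs. a xs - b xs)"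
proof -
  have "primrec_fun (Suc 0) (\<lambda>xs. xs ! 0 - 1)"
    by (rule primrec_fun_rec[where g="\<lambda>xs. 0" and h="\<lambda>ys. ys ! 0"])
      (simp_all add: primrec_fun_proj primrec_fun_zero)
  from primrec_fun_comp1[OF this[folded One_nat_def] primrec_fun_proj[of 1 "Suc (Suc (Suc 0))"]]
  have h: "primrec_fun (Suc (Suc (Suc 0))) (\<lambda>ys. ys ! 1 - 1)"
    by simp
  have "primrec_fun (Suc (Suc 0)) (\<lambda>xs. xs ! 1 - xs ! 0)"
    by (rule primrec_fun_rec[OF primrec_fun_proj h]) simp_all
  from primrec_fun_comp2[OF this[folded numeral_2_eq_2]]
  show "primrec_fun n a \<Longrightarrow> primrec_fun n b \<Longrightarrow> primrec_fun n (\<lambda>xs. a xs - b xs)"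
    by simp
qed

lemma primrec_pred_eq: "primrec_fun n a \<Longrightarrow> primrec_fun n b \<Longrightarrow> primrec_pred n (\<lambda>xs. a xs = b xs)"
  unfolding primrec_pred_def
  by (rule primrec_fun_cong[OF primrec_fun_diff[OF primrec_fun_const[of n 1]
        primrec_fun_add[OF primrec_fun_diff[of n a b] primrec_fun_diff[of n b a]]]]) auto

lemma primrec_pred_less: "primrec_fun n a \<Longrightarrow> primrec_fun n b \<Longrightarrow> primrec_pred n (\<lambda>xs. a xs < b xs)"
  unfolding primrec_pred_def
  by (rule primrec_fun_cong[OF primrec_fun_diff[OF primrec_fun_const[of n 1]
        primrec_fun_diff[OF primrec_fun_const[of n 1] primrec_fun_diff[of n b a]]]]) auto

lemma primrec_pred_not: "primrec_pred n P \<Longrightarrow> primrec_pred n (\<lambda>xs. \<not> P xs)"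
  using primrec_pred_eq[of n "\<lambda>xs. of_bool (P xs)" "\<lambda>_. 0"]
  by (simp add: primrec_pred_def primrec_fun_const)

lemma primrec_pred_conj:
  assumes "primrec_pred n P" and "primrec_pred n Q"
  shows "primrec_pred n (\<lambda>xs. P xs \<and> Q xs)"
proof -
  have "primrec_pred n (\<lambda>xs. 1 < of_bool (P xs) + (of_bool (Q xs) :: nat))"
    by (rule primrec_pred_less[OF primrec_fun_const primrec_fun_add])
      (use assms in \<open>simp_all add: primrec_pred_def\<close>)
  then show ?thesis
    unfolding primrec_pred_def by (rule primrec_fun_cong) (simp add: of_bool_def)
qed

lemma primrec_pred_disj:
  "primrec_pred n P \<Longrightarrow> primrec_pred n Q \<Longrightarrow> primrec_pred n (\<lambda>xs. P xs \<or> Q xs)"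
  using primrec_pred_not[OF primrec_pred_conj[OF primrec_pred_not primrec_pred_not], of n P Q]
  by simp

lemma primrec_pred_imp:
  "primrec_pred n P \<Longrightarrow> primrec_pred n Q \<Longrightarrow> primrec_pred n (\<lambda>xs. P xs \<longrightarrow> Q xs)"
  using primrec_pred_disj[OF primrec_pred_not, of n P Q] by simp

lemma primrec_pred_bex:
  assumes b: "primrec_fun n b" and P: "primrec_pred (Suc n) (\<lambda>ys. P (hd ys) (tl ys))"
  shows "primrec_pred n (\<lambda>xs. \<exists>i<b xs. P i xs)"
proof -
  have "primrec_pred (Suc (Suc n)) (\<lambda>ys. P (hd (hd ys # tl (tl ys))) (tl (hd ys # tl (tl ys))))"
    using P unfolding primrec_pred_def
    by (rule primrec_fun_reindex[where idx="\<lambda>j. if j = 0 then 0 else Suc j"])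
      (auto simp: nth_Cons nth_tl length_Suc_conv split: nat.split)
  then have "primrec_pred (Suc (Suc n)) (\<lambda>ys. 0 < ys ! 1 \<or> P (hd ys) (tl (tl ys)))"
    by (auto intro!: primrec_pred_disj primrec_pred_less primrec_fun_proj primrec_fun_const)
  then have "primrec_pred (Suc n) (\<lambda>ys. \<exists>i<hd ys. P i (tl ys))"
    unfolding primrec_pred_def
    by (rule primrec_fun_rec[OF primrec_fun_zero]) (auto simp: less_Suc_eq)
  then show ?thesis
    unfolding primrec_pred_def using primrec_fun_subst_hd[OF _ b] by fastforce
qed

lemma primrec_pred_ball:
  "primrec_fun n b \<Longrightarrow> primrec_pred (Suc n) (\<lambda>ys. P (hd ys) (tl ys))
    \<Longrightarrow> primrec_pred n (\<lambda>xs. \<forall>i<b xs. P i xs)"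
  using primrec_pred_not[OF primrec_pred_bex[OF _ primrec_pred_not, of n b "\<lambda>i xs. P i xs"]] by simp

lemma primrec_fun_of_bool: "primrec_pred n P \<Longrightarrow> primrec_fun n (\<lambda>xs. of_bool (P xs))"
  unfolding primrec_pred_def .

lemma primrec_fun_power2: "primrec_fun n a \<Longrightarrow> primrec_fun n (\<lambda>xs. 2 ^ a xs)"
proof -
  have "primrec_fun (Suc 0) (\<lambda>xs. 2 ^ (xs ! 0))"
    by (rule primrec_fun_rec[where g="\<lambda>_. 1" and h="\<lambda>ys. ys ! 1 + ys ! 1"])
      (simp_all add: primrec_fun_const primrec_fun_add primrec_fun_proj)
  from primrec_fun_comp1[OF this[folded One_nat_def]]
  show "primrec_fun n a \<Longrightarrow> primrec_fun n (\<lambda>xs. 2 ^ a xs)"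
    by simp
qed

lemma primrec_fun_mod2: "primrec_fun n a \<Longrightarrow> primrec_fun n (\<lambda>xs. a xs mod 2)"
proof -
  have "primrec_fun (Suc 0) (\<lambda>xs. xs ! 0 mod 2)"
    by (rule primrec_fun_rec[where g="\<lambda>_. 0" and h="\<lambda>ys. 1 - ys ! 1"])
      (simp_all add: primrec_fun_const primrec_fun_diff primrec_fun_proj mod_Suc)
  from primrec_fun_comp1[OF this[folded One_nat_def]]
  show "primrec_fun n a \<Longrightarrow> primrec_fun n (\<lambda>xs. a xs mod 2)"
    by simp
qed

lemma primrec_fun_div2: "primrec_fun n a \<Longrightarrow> primrec_fun n (\<lambda>xs. a xs div 2)"
proof -
  have Suc_div2: "Suc y div 2 = y div 2 + y mod 2" for y :: nat
    by presburger
  have "primrec_fun (Suc 0) (\<lambda>xs. xs ! 0 div 2)"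
    by (rule primrec_fun_rec[where g="\<lambda>_. 0" and h="\<lambda>ys. ys ! 1 + ys ! 0 mod 2"])
      (simp_all add: primrec_fun_const primrec_fun_add primrec_fun_mod2 primrec_fun_proj Suc_div2)
  from primrec_fun_comp1[OF this[folded One_nat_def]]
  show "primrec_fun n a \<Longrightarrow> primrec_fun n (\<lambda>xs. a xs div 2)"
    by simp
qed

lemma primrec_pred_mem_set_decode:
  "primrec_fun n a \<Longrightarrow> primrec_fun n b \<Longrightarrow> primrec_pred n (\<lambda>xs. a xs \<in> set_decode (b xs))"
proof -
  have div_Suc: "m div 2 ^ Suc i = m div 2 ^ i div 2" for m i :: nat
    by (simp add: div_mult2_eq power_Suc2 del: power_Suc)
  have "primrec_fun (Suc (Suc 0)) (\<lambda>xs. xs ! 1 div 2 ^ xs ! 0)"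
    by (rule primrec_fun_rec[where g="\<lambda>xs. xs ! 0" and h="\<lambda>ys. ys ! 1 div 2"])
      (simp_all add: primrec_fun_div2 primrec_fun_proj div_Suc del: power_Suc)
  from primrec_fun_comp2[OF this[folded numeral_2_eq_2]]
  have "primrec_fun n a \<Longrightarrow> primrec_fun n b \<Longrightarrow> primrec_fun n (\<lambda>xs. b xs div 2 ^ a xs)"
    by simp
  then show "primrec_fun n a \<Longrightarrow> primrec_fun n b \<Longrightarrow> primrec_pred n (\<lambda>xs. a xs \<in> set_decode (b xs))"
    using primrec_pred_eq[OF primrec_fun_mod2 primrec_fun_const[of n 1]]
    by (simp add: set_decode_def odd_iff_mod_2_eq_one)
qed

lemma primrec_fun_prod_encode:
  "primrec_fun n a \<Longrightarrow> primrec_fun n b \<Longrightarrow> primrec_fun n (\<lambda>xs. prod_encode (a xs, b xs))"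
proof -
  have "primrec_fun (Suc 0) (\<lambda>xs. triangle (xs ! 0))"
    by (rule primrec_fun_rec[where g="\<lambda>_. 0" and h="\<lambda>ys. ys ! 1 + Suc (ys ! 0)"])
      (simp_all add: primrec_fun_zero primrec_fun_add primrec_fun_Suc primrec_fun_proj)
  from primrec_fun_comp1[OF this[folded One_nat_def]]
  show "primrec_fun n a \<Longrightarrow> primrec_fun n b \<Longrightarrow> primrec_fun n (\<lambda>xs. prod_encode (a xs, b xs))"
    by (simp add: prod_encode_def primrec_fun_add)
qed

lemma ce_Collect_ex:
  assumes "primrec_pred 2 (\<lambda>xs. Q (xs ! 0) (xs ! 1))"
  shows "ce {z. \<exists>y. Q z y}"
proof -
  obtain g where g: "prim_rec 2 g" "\<forall>xs. length xs = 2 \<longrightarrow> g xs = of_bool (Q (xs ! 0) (xs ! 1))"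
    using assms unfolding primrec_pred_def primrec_fun_def by blast
  then have "{z. \<exists>y. Q z y} = {z. \<exists>y. g [z, y] \<noteq> 0}"
    by auto
  with g(1) show ?thesis
    unfolding ce_def by blast
qed

lemma ce_imp_primrec_fun:
  assumes "ce S"
  obtains f where "primrec_fun 2 f" and "\<And>z. z \<in> S \<longleftrightarrow> (\<exists>w. f [z, w] \<noteq> 0)"
  using assms prim_rec_imp_primrec_fun unfolding ce_def by blast

section \<open>Binary strings and their codes\<close>

definition string_set :: "bool list \<Rightarrow> nat set" where
  "string_set \<sigma> = {i. i < length \<sigma> \<and> \<sigma> ! i}"

definition char_string :: "nat set \<Rightarrow> nat \<Rightarrow> bool list" where
  "char_string X N = map (\<lambda>i. i \<in> X) [0..<N]"

lemma length_char_string [simp]: "length (char_string X N) = N"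
  by (simp add: char_string_def)

lemma nth_char_string [simp]: "i < N \<Longrightarrow> char_string X N ! i = (i \<in> X)"
  by (simp add: char_string_def)

lemma string_set_char_string: "string_set (char_string X N) = X \<inter> {..<N}"
  by (auto simp: string_set_def)

lemma char_string_string_set: "char_string (string_set \<sigma>) (length \<sigma>) = \<sigma>"
  by (rule nth_equalityI) (auto simp: string_set_def)

lemma initial_seg_char_string: "initial_seg (char_string X N) X"
  by (simp add: initial_seg_def)

lemma initial_seg_imp_string_set_subset: "initial_seg \<sigma> X \<Longrightarrow> string_set \<sigma> \<subseteq> X"
  by (auto simp: initial_seg_def string_set_def)

lemma initial_seg_string_set_Un: "D \<subseteq> {length \<sigma>..} \<Longrightarrow> initial_seg \<sigma> (string_set \<sigma> \<union> D)"
  by (auto simp: initial_seg_def string_set_def)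

lemma string_code_eq_iff [simp]: "string_code \<sigma> = string_code \<tau> \<longleftrightarrow> \<sigma> = \<tau>"
  by (auto simp: string_code_def list_encode_eq inj_map_eq_map inj_def)

lemma mem_set_decode_less: "i \<in> set_decode m \<Longrightarrow> i < m"
proof -
  assume "i \<in> set_decode m"
  then have "2 ^ i \<le> m"
    by (metis div_less even_zero mem_Collect_eq not_le set_decode_def)
  then show "i < m"
    using less_exp[of i] by linarith
qed

lemma set_decode_subset_iff: "set_decode m \<subseteq> S \<longleftrightarrow> (\<forall>i<m. i \<in> set_decode m \<longrightarrow> i \<in> S)"
  using mem_set_decode_less by blast

lemma ex_string_iff: "(\<exists>\<sigma>. P \<sigma>) \<longleftrightarrow> (\<exists>m N. set_decode m \<subseteq> {..<N} \<and> P (char_string (set_decode m) N))"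
proof
  assume "\<exists>\<sigma>. P \<sigma>"
  then obtain \<sigma> where "P \<sigma>" ..
  moreover have "finite (string_set \<sigma>)" and "string_set \<sigma> \<subseteq> {..<length \<sigma>}"
    by (auto simp: string_set_def)
  ultimately show "\<exists>m N. set_decode m \<subseteq> {..<N} \<and> P (char_string (set_decode m) N)"
    by (metis char_string_string_set set_encode_inverse)
qed blast

lemma mem_string_codes_iff:
  "z \<in> {prod_encode (string_code \<sigma>, x) | \<sigma> x. (\<sigma>, x) \<in> \<Theta>} \<longleftrightarrow>
    (\<exists>m N x. set_decode m \<subseteq> {..<N} \<and> z = prod_encode (string_code (char_string (set_decode m) N), x)
      \<and> (char_string (set_decode m) N, x) \<in> \<Theta>)"
  using ex_string_iff[of "\<lambda>\<sigma>. \<exists>x. z = prod_encode (string_code \<sigma>, x) \<and> (\<sigma>, x) \<in> \<Theta>"] by blast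

text \<open>\<^const>\<open>list_encode\<close> adds entries at the front, so the code of a string is computed
  from its last entry backwards.\<close>

fun suffix_code :: "nat \<Rightarrow> nat \<Rightarrow> nat \<Rightarrow> nat" where
  "suffix_code m N 0 = 0"
| "suffix_code m N (Suc j) =
     Suc (prod_encode (of_bool (N - Suc j \<in> set_decode m), suffix_code m N j))"

lemma suffix_code_eq:
  "j \<le> N \<Longrightarrow> suffix_code m N j = string_code (drop (N - j) (char_string (set_decode m) N))"
proof (induction j)
  case 0
  then show ?case by (simp add: string_code_def)
next
  case (Suc j)
  have "N - Suc j < N" and "Suc (N - Suc j) = N - j"
    using Suc.prems by arith+
  then have "drop (N - Suc j) (char_string (set_decode m) N)
      = (N - Suc j \<in> set_decode m) # drop (N - j) (char_string (set_decode m) N)"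
    using Cons_nth_drop_Suc[of "N - Suc j" "char_string (set_decode m) N"] by simp
  with Suc show ?case
    by (simp add: string_code_def)
qed

lemma primrec_fun_string_code_char_string:
  assumes "primrec_fun n a" and "primrec_fun n b"
  shows "primrec_fun n (\<lambda>xs. string_code (char_string (set_decode (a xs)) (b xs)))"
proof -
  have "primrec_fun (Suc (Suc (Suc 0))) (\<lambda>xs. suffix_code (xs ! 1) (xs ! 2) (xs ! 0))"
    by (rule primrec_fun_rec[where g="\<lambda>_. 0" and h="\<lambda>ys.
          Suc (prod_encode (of_bool (ys ! 3 - Suc (ys ! 0) \<in> set_decode (ys ! 2)), ys ! 1))"])
      (simp_all add: primrec_fun_zero primrec_fun_Suc primrec_fun_prod_encode primrec_fun_of_bool
        primrec_pred_mem_set_decode primrec_fun_diff primrec_fun_proj numeral_2_eq_2 numeral_3_eq_3)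
  from primrec_fun_comp3[OF this[folded numeral_3_eq_3] assms(2) assms(1) assms(2)]
  show ?thesis
    by (simp add: suffix_code_eq)
qed

lemmas primrec_intros =
  primrec_fun_tl primrec_fun_hd primrec_fun_proj primrec_fun_const primrec_fun_add primrec_fun_diff
  primrec_fun_Suc primrec_fun_power2 primrec_fun_prod_encode primrec_fun_string_code_char_string
  primrec_fun_of_bool primrec_pred_eq primrec_pred_less primrec_pred_conj primrec_pred_not
  primrec_pred_imp primrec_pred_mem_set_decode primrec_pred_bex primrec_pred_ball

section \<open>Enumeration functionals as relative c.e. operators\<close>

definition op_of_enum_functional :: "(nat set \<times> nat set) set \<Rightarrow> (bool list \<times> nat) set" where
  "op_of_enum_functional \<Psi> = {(\<sigma>, x). \<exists>(E, F)\<in>\<Psi>. E \<subseteq> string_set \<sigma> \<and> x \<in> F}"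

lemma op_apply_op_of_enum_functional:
  assumes fin: "\<forall>(E, F)\<in>\<Psi>. finite E"
  shows "op_apply (op_of_enum_functional \<Psi>) X = enum_apply \<Psi> X"
proof
  show "op_apply (op_of_enum_functional \<Psi>) X \<subseteq> enum_apply \<Psi> X"
  proof
    fix x assume "x \<in> op_apply (op_of_enum_functional \<Psi>) X"
    then obtain \<sigma> E F where "initial_seg \<sigma> X" "(E, F) \<in> \<Psi>" "E \<subseteq> string_set \<sigma>" "x \<in> F"
      unfolding op_apply_def op_of_enum_functional_def by blast
    then show "x \<in> enum_apply \<Psi> X"
      unfolding enum_apply_def using initial_seg_imp_string_set_subset by blast
  qed
next
  show "enum_apply \<Psi> X \<subseteq> op_apply (op_of_enum_functional \<Psi>) X"
  proof
    fix x assume "x \<in> enum_apply \<Psi> X"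
    then obtain E F where EF: "(E, F) \<in> \<Psi>" "E \<subseteq> X" "x \<in> F"
      unfolding enum_apply_def by blast
    have "finite E"
      using fin EF(1) by blast
    then obtain N where "E \<subseteq> {..<N}"
      by (auto simp: finite_nat_set_iff_bounded)
    with EF have "(char_string X N, x) \<in> op_of_enum_functional \<Psi>"
      by (auto simp: op_of_enum_functional_def string_set_char_string)
    then show "x \<in> op_apply (op_of_enum_functional \<Psi>) X"
      using initial_seg_char_string unfolding op_apply_def by blast
  qed
qed

lemma bex_codes_iff:
  assumes fin: "\<forall>(E, F)\<in>\<Psi>. finite E \<and> finite F"
    and codes: "\<And>c. c \<in> {prod_encode (set_encode E, set_encode F) | E F. (E, F) \<in> \<Psi>}
                  \<longleftrightarrow> (\<exists>w. f [c, w] \<noteq> 0)"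
  shows "(\<exists>(E, F)\<in>\<Psi>. Q E F) \<longleftrightarrow>
    (\<exists>e u w. f [prod_encode (e, u), w] \<noteq> 0 \<and> Q (set_decode e) (set_decode u))"
proof
  assume "\<exists>(E, F)\<in>\<Psi>. Q E F"
  then obtain E F where "(E, F) \<in> \<Psi>" and "Q E F"
    by blast
  moreover from this obtain w where "f [prod_encode (set_encode E, set_encode F), w] \<noteq> 0"
    using codes by blast
  ultimately show "\<exists>e u w. f [prod_encode (e, u), w] \<noteq> 0 \<and> Q (set_decode e) (set_decode u)"
    using fin by fastforce
next
  assume "\<exists>e u w. f [prod_encode (e, u), w] \<noteq> 0 \<and> Q (set_decode e) (set_decode u)"
  then obtain e u w where "f [prod_encode (e, u), w] \<noteq> 0" and Q: "Q (set_decode e) (set_decode u)"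
    by blast
  then obtain E F where "(E, F) \<in> \<Psi>" and "e = set_encode E" and "u = set_encode F"
    using codes[of "prod_encode (e, u)"] by (auto simp: prod_encode_eq)
  with Q fin show "\<exists>(E, F)\<in>\<Psi>. Q E F"
    by fastforce
qed

lemma op_of_enum_functional_codes:
  assumes fin: "\<forall>(E, F)\<in>\<Psi>. finite E \<and> finite F"
    and codes: "\<And>c. c \<in> {prod_encode (set_encode E, set_encode F) | E F. (E, F) \<in> \<Psi>}
                  \<longleftrightarrow> (\<exists>w. f [c, w] \<noteq> 0)"
  shows "{prod_encode (string_code \<sigma>, x) | \<sigma> x. (\<sigma>, x) \<in> op_of_enum_functional \<Psi>} =
    {z. \<exists>m N e u w x. set_decode m \<subseteq> {..<N}
      \<and> z = prod_encode (string_code (char_string (set_decode m) N), x)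
      \<and> f [prod_encode (e, u), w] \<noteq> 0 \<and> set_decode e \<subseteq> set_decode m \<inter> {..<N} \<and> x \<in> set_decode u}"
    (is "?L = ?R")
proof (rule set_eqI)
  fix z
  have "z \<in> ?L \<longleftrightarrow> (\<exists>m N x. set_decode m \<subseteq> {..<N}
            \<and> z = prod_encode (string_code (char_string (set_decode m) N), x)
            \<and> (\<exists>(E, F)\<in>\<Psi>. E \<subseteq> set_decode m \<inter> {..<N} \<and> x \<in> F))"
    unfolding mem_string_codes_iff by (simp add: op_of_enum_functional_def string_set_char_string)
  then show "z \<in> ?L \<longleftrightarrow> z \<in> ?R"
    unfolding bex_codes_iff[OF fin codes] by blast
qed

lemma rel_ce_operator_op_of_enum_functional:
  assumes "enum_functional \<Psi>"
  shows "rel_ce_operator (op_of_enum_functional \<Psi>)"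
proof -
  have fin: "\<forall>(E, F)\<in>\<Psi>. finite E \<and> finite F"
    and ce_codes: "ce {prod_encode (set_encode E, set_encode F) | E F. (E, F) \<in> \<Psi>}"
    using assms unfolding enum_functional_def by blast+
  from ce_codes obtain f where f: "primrec_fun 2 f"
    and codes: "\<And>c. c \<in> {prod_encode (set_encode E, set_encode F) | E F. (E, F) \<in> \<Psi>}
                  \<longleftrightarrow> (\<exists>w. f [c, w] \<noteq> 0)"
    by (rule ce_imp_primrec_fun) blast
  define P where "P z m N e u w x \<longleftrightarrow>
      set_decode m \<subseteq> {..<N} \<and> z = prod_encode (string_code (char_string (set_decode m) N), x)
      \<and> f [prod_encode (e, u), w] \<noteq> 0 \<and> set_decode e \<subseteq> set_decode m \<inter> {..<N} \<and> x \<in> set_decode u"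
    for z m N e u w x
  have "{prod_encode (string_code \<sigma>, x) | \<sigma> x. (\<sigma>, x) \<in> op_of_enum_functional \<Psi>}
      = {z. \<exists>m N e u w x. P z m N e u w x}"
    unfolding P_def by (rule op_of_enum_functional_codes[OF fin codes])
  \<comment> \<open>a single witness bounding all others turns this into the projection of one
    primitive recursive relation\<close>
  also have "\<dots> = {z. \<exists>y. \<exists>m<y. \<exists>N<y. \<exists>e<y. \<exists>u<y. \<exists>w<y. \<exists>x<y. P z m N e u w x}"
  proof (intro Collect_cong iffI)
    fix z assume "\<exists>m N e u w x. P z m N e u w x"
    then obtain m N e u w x where "P z m N e u w x" by blast
    moreover define y where "y = Suc (m + N + e + u + w + x)"
    then have "m < y" "N < y" "e < y" "u < y" "w < y" "x < y"
      by simp_all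
    ultimately show "\<exists>y. \<exists>m<y. \<exists>N<y. \<exists>e<y. \<exists>u<y. \<exists>w<y. \<exists>x<y. P z m N e u w x"
      by blast
  qed blast
  moreover have "ce {z. \<exists>y. \<exists>m<y. \<exists>N<y. \<exists>e<y. \<exists>u<y. \<exists>w<y. \<exists>x<y. P z m N e u w x}"
    unfolding P_def set_decode_subset_iff Int_iff lessThan_iff
    by (rule ce_Collect_ex, intro primrec_intros primrec_fun_comp2[OF f]) auto
  ultimately show ?thesis
    unfolding rel_ce_operator_def by simp
qed

section \<open>Enumeration functionals from relative c.e. operators\<close>

definition enum_functional_of_op :: "(bool list \<times> nat) set \<Rightarrow> (nat set \<times> nat set) set" where
  "enum_functional_of_op \<Theta> = {(string_set \<sigma>, {x}) | \<sigma> x. (\<sigma>, x) \<in> \<Theta>}"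

lemma op_apply_subset_enum_apply_enum_functional_of_op:
  "op_apply \<Theta> X \<subseteq> enum_apply (enum_functional_of_op \<Theta>) X"
  unfolding op_apply_def enum_apply_def enum_functional_of_op_def
  using initial_seg_imp_string_set_subset by blast

lemma enum_apply_enum_functional_of_op_imp_op_apply:
  assumes "x \<in> enum_apply (enum_functional_of_op \<Theta>) X"
  shows "\<exists>Y\<subseteq>X. finite (X - Y) \<and> x \<in> op_apply \<Theta> Y"
proof -
  obtain \<sigma> where \<sigma>: "(\<sigma>, x) \<in> \<Theta>" and sub: "string_set \<sigma> \<subseteq> X"
    using assms unfolding enum_apply_def enum_functional_of_op_def by blast
  define Y where "Y = string_set \<sigma> \<union> {i \<in> X. length \<sigma> \<le> i}"
  have "Y \<subseteq> X"
    using sub unfolding Y_def by blast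
  moreover have "finite (X - Y)"
    by (rule finite_subset[of _ "{..<length \<sigma>}"]) (auto simp: Y_def)
  moreover have "initial_seg \<sigma> Y"
    unfolding Y_def by (rule initial_seg_string_set_Un) auto
  ultimately show ?thesis
    using \<sigma> unfolding op_apply_def by blast
qed

lemma enum_functional_of_op_codes:
  assumes mem: "\<And>\<sigma> x. (\<sigma>, x) \<in> \<Theta> \<longleftrightarrow> (\<exists>w. g [prod_encode (string_code \<sigma>, x), w] \<noteq> 0)"
  shows "{prod_encode (set_encode E, set_encode F) | E F. (E, F) \<in> enum_functional_of_op \<Theta>} =
    {z. \<exists>m N x w. set_decode m \<subseteq> {..<N}
      \<and> g [prod_encode (string_code (char_string (set_decode m) N), x), w] \<noteq> 0
      \<and> z = prod_encode (m, 2 ^ x)}"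
    (is "?L = ?R")
proof (rule set_eqI)
  fix z
  have "z \<in> ?L \<longleftrightarrow> (\<exists>\<sigma> x. (\<sigma>, x) \<in> \<Theta> \<and> z = prod_encode (set_encode (string_set \<sigma>), set_encode {x}))"
    unfolding enum_functional_of_op_def by blast
  also have "\<dots> \<longleftrightarrow> (\<exists>m N x. set_decode m \<subseteq> {..<N} \<and> (char_string (set_decode m) N, x) \<in> \<Theta>
      \<and> z = prod_encode (m, 2 ^ x))"
    by (subst ex_string_iff) (simp add: string_set_char_string Int_absorb2 cong: conj_cong)
  finally show "z \<in> ?L \<longleftrightarrow> z \<in> ?R"
    unfolding mem by blast
qed

lemma enum_functional_enum_functional_of_op:
  assumes "rel_ce_operator \<Theta>"
  shows "enum_functional (enum_functional_of_op \<Theta>)"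
proof -
  obtain g where g: "primrec_fun 2 g"
    and codes: "\<And>c. c \<in> {prod_encode (string_code \<sigma>, x) | \<sigma> x. (\<sigma>, x) \<in> \<Theta>}
                  \<longleftrightarrow> (\<exists>w. g [c, w] \<noteq> 0)"
    using assms unfolding rel_ce_operator_def by (rule ce_imp_primrec_fun) blast
  have mem: "(\<sigma>, x) \<in> \<Theta> \<longleftrightarrow> (\<exists>w. g [prod_encode (string_code \<sigma>, x), w] \<noteq> 0)" for \<sigma> x
    unfolding codes[symmetric] by (auto simp: prod_encode_eq)
  define P where "P z m N x w \<longleftrightarrow> set_decode m \<subseteq> {..<N}
      \<and> g [prod_encode (string_code (char_string (set_decode m) N), x), w] \<noteq> 0
      \<and> z = prod_encode (m, 2 ^ x)"
    for z m N x w
  have "{prod_encode (set_encode E, set_encode F) | E F. (E, F) \<in> enum_functional_of_op \<Theta>}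
      = {z. \<exists>m N x w. P z m N x w}"
    unfolding P_def by (rule enum_functional_of_op_codes[OF mem])
  also have "\<dots> = {z. \<exists>y. \<exists>m<y. \<exists>N<y. \<exists>x<y. \<exists>w<y. P z m N x w}"
  proof (intro Collect_cong iffI)
    fix z assume "\<exists>m N x w. P z m N x w"
    then obtain m N x w where "P z m N x w" by blast
    moreover define y where "y = Suc (m + N + x + w)"
    then have "m < y" "N < y" "x < y" "w < y"
      by simp_all
    ultimately show "\<exists>y. \<exists>m<y. \<exists>N<y. \<exists>x<y. \<exists>w<y. P z m N x w"
      by blast
  qed blast
  moreover have "ce {z. \<exists>y. \<exists>m<y. \<exists>N<y. \<exists>x<y. \<exists>w<y. P z m N x w}"
    unfolding P_def set_decode_subset_iff lessThan_iff
    by (rule ce_Collect_ex, intro primrec_intros primrec_fun_comp2[OF g]) auto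
  moreover have "\<forall>(E, F)\<in>enum_functional_of_op \<Theta>. finite E \<and> finite F"
    by (auto simp: enum_functional_of_op_def string_set_def)
  ultimately show ?thesis
    unfolding enum_functional_def by simp
qed

lemma enum_apply_enum_functional_of_op_eq:
  assumes A: "\<forall>C. C \<subseteq> B \<and> infinite C \<longrightarrow> op_apply \<Theta> C = A"
    and "C \<subseteq> B" and "infinite C"
  shows "enum_apply (enum_functional_of_op \<Theta>) C = A"
proof
  have "op_apply \<Theta> C = A"
    using A assms(2,3) by blast
  then show "A \<subseteq> enum_apply (enum_functional_of_op \<Theta>) C"
    using op_apply_subset_enum_apply_enum_functional_of_op[of \<Theta> C] by simp
  show "enum_apply (enum_functional_of_op \<Theta>) C \<subseteq> A"
  proof
    fix x assume "x \<in> enum_apply (enum_functional_of_op \<Theta>) C"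
    then obtain Y where "Y \<subseteq> C" and "finite (C - Y)" and x: "x \<in> op_apply \<Theta> Y"
      using enum_apply_enum_functional_of_op_imp_op_apply by blast
    from \<open>finite (C - Y)\<close> \<open>infinite C\<close> have "infinite Y"
      using finite_Diff2 by blast
    with \<open>Y \<subseteq> C\<close> \<open>C \<subseteq> B\<close> have "op_apply \<Theta> Y = A"
      using A by blast
    with x show "x \<in> A"
      by simp
  qed
qed

theorem proposition2p1:
  fixes A B :: "nat set"
  assumes "infinite A" and "infinite B"
  shows "(\<exists>\<Psi>. enum_functional \<Psi> \<and>
            (\<forall>C. C \<subseteq> B \<and> infinite C \<longrightarrow> enum_apply \<Psi> C = A))
     \<longleftrightarrow> (\<exists>\<Theta>. rel_ce_operator \<Theta> \<and>
            (\<forall>C. C \<subseteq> B \<and> infinite C \<longrightarrow> op_apply \<Theta> C = A))"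
proof
  assume "\<exists>\<Psi>. enum_functional \<Psi> \<and> (\<forall>C. C \<subseteq> B \<and> infinite C \<longrightarrow> enum_apply \<Psi> C = A)"
  then obtain \<Psi> where \<Psi>: "enum_functional \<Psi>" and A: "\<forall>C. C \<subseteq> B \<and> infinite C \<longrightarrow> enum_apply \<Psi> C = A"
    by blast
  have "\<forall>(E, F)\<in>\<Psi>. finite E"
    using \<Psi> unfolding enum_functional_def by blast
  with \<Psi> A show "\<exists>\<Theta>. rel_ce_operator \<Theta> \<and> (\<forall>C. C \<subseteq> B \<and> infinite C \<longrightarrow> op_apply \<Theta> C = A)"
    by (intro exI[of _ "op_of_enum_functional \<Psi>"])
      (simp add: rel_ce_operator_op_of_enum_functional op_apply_op_of_enum_functional)
next
  assume "\<exists>\<Theta>. rel_ce_operator \<Theta> \<and> (\<forall>C. C \<subseteq> B \<and> infinite C \<longrightarrow> op_apply \<Theta> C = A)"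
  then obtain \<Theta> where "rel_ce_operator \<Theta>" and "\<forall>C. C \<subseteq> B \<and> infinite C \<longrightarrow> op_apply \<Theta> C = A"
    by blast
  then show "\<exists>\<Psi>. enum_functional \<Psi> \<and> (\<forall>C. C \<subseteq> B \<and> infinite C \<longrightarrow> enum_apply \<Psi> C = A)"
    by (intro exI[of _ "enum_functional_of_op \<Theta>"])
      (simp add: enum_functional_enum_functional_of_op enum_apply_enum_functional_of_op_eq)
qed

end
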